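(* Let $(A,\times)$ be a (left) Leibniz dual algebra over a field, i.e. $(a\times b)\times c=a\times(b\times c+c\times b)$ for all $a,b,c\in A$. Then $A$ satisfies the (right) Tortken identity $$(a\times b)\times(c\times d)-(a\times d)\times(c\times b)=(a,b,c)\times d-(a,d,c)\times b\quad\text{for all }a,b,c,d\in A.$$
   Context: The associator is $(a,b,c)=a\times(b\times c)-(a\times b)\times c$. *)

theory Defs
  imports Main "HOL.Vector_Spaces"
begin

definition algebra_over :: "('k::field \<Rightarrow> 'v::ab_group_add \<Rightarrow> 'v) \<Rightarrow> ('v \<Rightarrow> 'v \<Rightarrow> 'v) \<Rightarrow> bool" where
  "algebra_over scale mult \<longleftrightarrow>
     vector_space scale \<and>
     (\<forall>x y z. mult (x + y) z = mult x z + mult y z) \<and>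
     (\<forall>x y z. mult x (y + z) = mult x y + mult x z) \<and>
     (\<forall>c x y. mult (scale c x) y = scale c (mult x y)) \<and>
     (\<forall>c x y. mult x (scale c y) = scale c (mult x y))"

definition associator :: "('v::ab_group_add \<Rightarrow> 'v \<Rightarrow> 'v) \<Rightarrow> 'v \<Rightarrow> 'v \<Rightarrow> 'v \<Rightarrow> 'v" where
  "associator mult a b c = mult a (mult b c) - mult (mult a b) c"

definition left_leibniz_dual :: "('v::ab_group_add \<Rightarrow> 'v \<Rightarrow> 'v) \<Rightarrow> bool" where
  "left_leibniz_dual mult \<longleftrightarrow>
     (\<forall>a b c. mult (mult a b) c = mult a (mult b c + mult c b))"

end

theory Submission
  imports Defs
begin

text \<open>In a left Leibniz dual algebra the associator is (a,b,c) = -a(cb), so both sides of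
  the Tortken identity expand, using only biadditivity, to
  a(b(cd)) + a((cd)b) - a(d(cb)) - a((cb)d).\<close>

lemma additive_map_minus:
  fixes f :: "'a::ab_group_add \<Rightarrow> 'b::ab_group_add"
  assumes "\<And>x y. f (x + y) = f x + f y"
  shows "f (- x) = - f x"
proof -
  have "f 0 = 0"
    using assms [of 0 0] by simp
  moreover have "f (- x) + f x = f 0"
    using assms [of "- x" x] by simp
  ultimately show ?thesis
    by (simp add: eq_neg_iff_add_eq_0)
qed

lemma algebra_over_add_left:
  "algebra_over scale mult \<Longrightarrow> mult (x + y) z = mult x z + mult y z"
  unfolding algebra_over_def by blast

lemma algebra_over_add_right:
  "algebra_over scale mult \<Longrightarrow> mult x (y + z) = mult x y + mult x z"
  unfolding algebra_over_def by blast

lemma left_leibniz_dual_expand: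
  assumes "left_leibniz_dual mult"
    and "\<And>x y z. mult x (y + z) = mult x y + mult x z"
  shows "mult (mult a b) c = mult a (mult b c) + mult a (mult c b)"
  using assms unfolding left_leibniz_dual_def by metis

lemma left_leibniz_dual_associator:
  assumes "left_leibniz_dual mult"
    and "\<And>x y z. mult x (y + z) = mult x y + mult x z"
  shows "associator mult a b c = - mult a (mult c b)"
  unfolding associator_def left_leibniz_dual_expand [OF assms] by simp

theorem mainTheorem16:
  fixes scale :: "'k::field \<Rightarrow> 'v::ab_group_add \<Rightarrow> 'v"
    and mult :: "'v \<Rightarrow> 'v \<Rightarrow> 'v"
  assumes "algebra_over scale mult"
    and "left_leibniz_dual mult"
  shows "\<forall>a b c d.
    mult (mult a b) (mult c d) - mult (mult a d) (mult c b)
      = mult (associator mult a b c) d - mult (associator mult a d c) b"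
proof (intro allI)
  fix a b c d
  note add_right = algebra_over_add_right [OF assms(1)]
  have minus_left: "mult (- x) z = - mult x z" for x z
    using additive_map_minus [of "\<lambda>x. mult x z"] algebra_over_add_left [OF assms(1)]
    by blast
  show "mult (mult a b) (mult c d) - mult (mult a d) (mult c b)
      = mult (associator mult a b c) d - mult (associator mult a d c) b"
    unfolding left_leibniz_dual_associator [OF assms(2) add_right] minus_left
      left_leibniz_dual_expand [OF assms(2) add_right] add_right
    by (simp add: algebra_simps)
qed

end
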